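(* Let $G=(V,E)$ be a graph, $\mathcal{T}$ a neighbourhood decomposition of $G$, and $\alpha$ a local linear cardinality constraint. Let $T\in\mathcal{T}$ be a type that is nonuniform with respect to $\alpha$. Then there exist a partition $\mathcal{T}'$ of $T$ and a local linear cardinality constraint $\alpha'$ such that: 1. $|\mathcal{T}'|\le 4$; 2. $\nu_{\alpha'}\big((\mathcal{T}\setminus\{T\})\cup\mathcal{T}'\big)<\nu_\alpha(\mathcal{T})$; 3. for every $X\subseteq V$, $X$ satisfies $\alpha$ if and only if $X$ satisfies $\alpha'$.
   Context: Neighbourhood decompositions: - Two vertices $u,v$ have the same neighbourhood type if $N(u)\setminus\{v\}=N(v)\setminus\{u\}$. - A neighbourhood decomposition is a partition of $V$ into classes ("types") of pairwise same-type vertices. - Any partition refining a neighbourhood decomposition is again one. Local linear cardinality constraints: - A local linear cardinality constraint is a map $\alpha$ assigning to each $v\in V$ an interval of integers $\alpha(v)=\{l_v,\dots,u_v\}\subseteq\{0,\dots,|V|\}$, possibly empty. - A set $X\subseteq V$ satisfies $\alpha$ if $|X\cap N(v)|\in\alpha(v)$ for all $v\in V$. Uniformity: - A type $T$ is uniform with respect to $\alpha$ if $\alpha(u)=\alpha(v)$ for all $u,v\in T$, and nonuniform otherwise. - $\nu_\alpha(\mathcal{T})$ denotes the number of types of $\mathcal{T}$ that are nonuniform with respect to $\alpha$. *)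

theory Defs
  imports Main
begin

definition graph :: "'a set \<Rightarrow> ('a \<Rightarrow> 'a \<Rightarrow> bool) \<Rightarrow> bool" where
  "graph V E \<longleftrightarrow> finite V \<and> (\<forall>u v. E u v \<longrightarrow> u \<in> V \<and> v \<in> V)
     \<and> (\<forall>u v. E u v \<longrightarrow> E v u) \<and> (\<forall>v. \<not> E v v)"

definition nbhd :: "'a set \<Rightarrow> ('a \<Rightarrow> 'a \<Rightarrow> bool) \<Rightarrow> 'a \<Rightarrow> 'a set" where
  "nbhd V E v = {u \<in> V. E v u}"

definition same_type :: "'a set \<Rightarrow> ('a \<Rightarrow> 'a \<Rightarrow> bool) \<Rightarrow> 'a \<Rightarrow> 'a \<Rightarrow> bool" where
  "same_type V E u v \<longleftrightarrow> nbhd V E u - {v} = nbhd V E v - {u}"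

definition is_partition :: "'a set set \<Rightarrow> 'a set \<Rightarrow> bool" where
  "is_partition P S \<longleftrightarrow> \<Union>P = S \<and> {} \<notin> P
     \<and> (\<forall>A\<in>P. \<forall>B\<in>P. A \<noteq> B \<longrightarrow> A \<inter> B = {})"

definition nbhd_decomp :: "'a set \<Rightarrow> ('a \<Rightarrow> 'a \<Rightarrow> bool) \<Rightarrow> 'a set set \<Rightarrow> bool" where
  "nbhd_decomp V E \<T> \<longleftrightarrow> is_partition \<T> V
     \<and> (\<forall>T\<in>\<T>. \<forall>u\<in>T. \<forall>v\<in>T. same_type V E u v)"

definition llcc :: "'a set \<Rightarrow> ('a \<Rightarrow> nat set) \<Rightarrow> bool" where
  "llcc V \<alpha> \<longleftrightarrow> (\<forall>v\<in>V. (\<exists>l u. \<alpha> v = {l..u}) \<and> \<alpha> v \<subseteq> {0..card V})"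

definition satisfies :: "'a set \<Rightarrow> ('a \<Rightarrow> 'a \<Rightarrow> bool) \<Rightarrow> 'a set \<Rightarrow> ('a \<Rightarrow> nat set) \<Rightarrow> bool" where
  "satisfies V E X \<alpha> \<longleftrightarrow> (\<forall>v\<in>V. card (X \<inter> nbhd V E v) \<in> \<alpha> v)"

definition uniform :: "('a \<Rightarrow> nat set) \<Rightarrow> 'a set \<Rightarrow> bool" where
  "uniform \<alpha> T \<longleftrightarrow> (\<forall>u\<in>T. \<forall>v\<in>T. \<alpha> u = \<alpha> v)"

definition nu :: "('a \<Rightarrow> nat set) \<Rightarrow> 'a set set \<Rightarrow> nat" where
  "nu \<alpha> \<T> = card {T \<in> \<T>. \<not> uniform \<alpha> T}"

end

theory Submission
  imports Defs
begin

text \<open>Two vertices of the same type have the same neighbourhood up to each other, so for any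
  set X their numbers of neighbours in X differ by at most one. Hence on a type T only the
  largest lower bound L and the smallest upper bound U of the intervals of \<alpha> really bind:
  a lower bound below L may be replaced by L - 1 and an upper bound above U by U + 1 without
  changing which sets satisfy the constraint. After this the interval of a vertex depends only
  on whether its bounds equal L and U, which splits T into at most four uniform classes.
  If some interval on T is empty, no set satisfies \<alpha> and T can be made uniformly empty.\<close>

lemma card_inter_nbhd_le_Suc_if_same_type:
  assumes "finite V" and "same_type V E v w"
  shows "card (X \<inter> nbhd V E v) \<le> card (X \<inter> nbhd V E w) + 1"
proof -
  have fin: "finite (X \<inter> nbhd V E w)" using assms(1) unfolding nbhd_def by auto
  have "X \<inter> nbhd V E v \<subseteq> insert w (X \<inter> nbhd V E w)"
    using assms(2) unfolding same_type_def by blast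
  then have "card (X \<inter> nbhd V E v) \<le> card (insert w (X \<inter> nbhd V E w))"
    using fin by (intro card_mono) auto
  also have "\<dots> \<le> card (X \<inter> nbhd V E w) + 1"
    using fin by (simp add: card_insert_if)
  finally show ?thesis .
qed

definition tightened_interval :: "nat \<Rightarrow> nat \<Rightarrow> nat \<Rightarrow> nat \<Rightarrow> nat set" where
  "tightened_interval L U l u = {(if l = L then L else L - 1)..(if u = U then U else U + 1)}"

lemma in_intervals_iff_in_tightened_intervals:
  fixes c lo hi :: "'a \<Rightarrow> nat"
  assumes "finite T" and close: "\<forall>v\<in>T. \<forall>w\<in>T. c v \<le> c w + 1"
  shows "(\<forall>v\<in>T. c v \<in> {lo v..hi v}) \<longleftrightarrow>
    (\<forall>v\<in>T. c v \<in> tightened_interval (Max (lo ` T)) (Min (hi ` T)) (lo v) (hi v))"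
    (is "?orig \<longleftrightarrow> ?tight")
proof (cases "T = {}")
  case False
  define L where "L = Max (lo ` T)"
  define U where "U = Min (hi ` T)"
  have lo_le: "lo v \<le> L" and hi_ge: "U \<le> hi v" if "v \<in> T" for v
    using that assms(1) by (auto simp: L_def U_def)
  have "L \<in> lo ` T" "U \<in> hi ` T"
    unfolding L_def U_def using assms(1) False by (intro Max_in Min_in; simp)+
  then obtain wl wu where wl: "wl \<in> T" "lo wl = L" and wu: "wu \<in> T" "hi wu = U"
    by blast
  have "?orig \<longleftrightarrow> (\<forall>v\<in>T. c v \<in> tightened_interval L U (lo v) (hi v))"
  proof
    assume orig: ?orig
    show "\<forall>v\<in>T. c v \<in> tightened_interval L U (lo v) (hi v)"
    proof
      fix v assume v: "v \<in> T"
      have "lo v \<le> c v" "c v \<le> hi v" using orig v by auto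
      moreover have "L \<le> c wl" "c wu \<le> U" using orig wl wu by auto
      moreover have "c wl \<le> c v + 1" "c v \<le> c wu + 1" using close v wl wu by auto
      ultimately show "c v \<in> tightened_interval L U (lo v) (hi v)"
        using lo_le[OF v] hi_ge[OF v] unfolding tightened_interval_def by auto
    qed
  next
    assume tight: "\<forall>v\<in>T. c v \<in> tightened_interval L U (lo v) (hi v)"
    show ?orig
    proof
      fix v assume v: "v \<in> T"
      have "L \<le> c wl" "c wu \<le> U"
        using tight wl wu by (auto simp: tightened_interval_def)
      moreover have "c wl \<le> c v + 1" "c v \<le> c wu + 1" using close v wl wu by auto
      moreover have "(if lo v = L then L else L - 1) \<le> c v" "c v \<le> (if hi v = U then U else U + 1)"
        using tight v by (auto simp: tightened_interval_def)
      ultimately show "c v \<in> {lo v..hi v}"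
        using lo_le[OF v] hi_ge[OF v] by (simp split: if_splits)
    qed
  qed
  then show ?thesis unfolding L_def U_def .
qed simp

lemma is_partition_fibres: "is_partition ((\<lambda>y. {x \<in> A. f x = y}) ` f ` A) A"
  unfolding is_partition_def by auto

lemma card_fibres_le: "finite A \<Longrightarrow> card ((\<lambda>y. {x \<in> A. f x = y}) ` f ` A) \<le> card (f ` A)"
  by (intro card_image_le) auto

lemma nu_less_if_refined_uniformly:
  assumes "is_partition \<T> V" and "finite V" and "T \<in> \<T>" and "\<not> uniform \<alpha> T"
    and agree: "\<forall>v. v \<notin> T \<longrightarrow> \<alpha>' v = \<alpha> v" and unif: "\<forall>B\<in>\<T>'. uniform \<alpha>' B"
  shows "nu \<alpha>' ((\<T> - {T}) \<union> \<T>') < nu \<alpha> \<T>"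
proof -
  have "finite (\<Union>\<T>)" using assms(1,2) by (simp add: is_partition_def)
  then have fin: "finite \<T>" by (rule finite_UnionD)
  have disj: "\<forall>A\<in>\<T>. \<forall>B\<in>\<T>. A \<noteq> B \<longrightarrow> A \<inter> B = {}"
    using assms(1) unfolding is_partition_def by blast
  have "{B \<in> (\<T> - {T}) \<union> \<T>'. \<not> uniform \<alpha>' B} \<subseteq> {B \<in> \<T>. \<not> uniform \<alpha> B} - {T}"
  proof
    fix B assume B: "B \<in> {B \<in> (\<T> - {T}) \<union> \<T>'. \<not> uniform \<alpha>' B}"
    then have B_old: "B \<in> \<T> - {T}" and "\<not> uniform \<alpha>' B" using unif by auto
    then have "B \<inter> T = {}" using disj assms(3) by blast
    then have "\<forall>v\<in>B. \<alpha>' v = \<alpha> v" using agree by blast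
    then have "\<not> uniform \<alpha> B" using \<open>\<not> uniform \<alpha>' B\<close> unfolding uniform_def by metis
    then show "B \<in> {B \<in> \<T>. \<not> uniform \<alpha> B} - {T}" using B_old by blast
  qed
  then have "nu \<alpha>' ((\<T> - {T}) \<union> \<T>') \<le> card ({B \<in> \<T>. \<not> uniform \<alpha> B} - {T})"
    unfolding nu_def using fin by (intro card_mono) auto
  also have "\<dots> < nu \<alpha> \<T>"
    unfolding nu_def using fin assms(3,4) by (intro card_Diff1_less) auto
  finally show ?thesis .
qed

lemma not_satisfies_if_empty_constraint:
  "w \<in> V \<Longrightarrow> \<alpha> w = {} \<Longrightarrow> \<not> satisfies V E X \<alpha>"
  unfolding satisfies_def by blast

definition tighten :: "'a set \<Rightarrow> ('a \<Rightarrow> nat set) \<Rightarrow> 'a \<Rightarrow> nat set" where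
  "tighten T \<alpha> v = (if v \<in> T
     then tightened_interval (Max ((Min \<circ> \<alpha>) ` T)) (Min ((Max \<circ> \<alpha>) ` T)) (Min (\<alpha> v)) (Max (\<alpha> v))
     else \<alpha> v)"

lemma interval_eq_Min_Max:
  assumes "llcc V \<alpha>" and "v \<in> V" and "\<alpha> v \<noteq> {}"
  shows "\<alpha> v = {Min (\<alpha> v)..Max (\<alpha> v)}" and "Max (\<alpha> v) \<le> card V"
proof -
  obtain l u where lu: "\<alpha> v = {l..u}" "\<alpha> v \<subseteq> {0..card V}"
    using assms(1,2) unfolding llcc_def by blast
  have "l \<le> u" using lu(1) assms(3) by simp
  then have Min: "Min {l..u} = l" and Max: "Max {l..u} = u" by (auto intro!: Min_eqI Max_eqI)
  show "\<alpha> v = {Min (\<alpha> v)..Max (\<alpha> v)}" unfolding lu(1) Min Max ..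
  show "Max (\<alpha> v) \<le> card V" using lu(2) \<open>l \<le> u\<close> unfolding lu(1) Max by simp
qed

lemma tightened_interval_subset_atLeastAtMost:
  "U \<le> u \<Longrightarrow> u \<le> n \<Longrightarrow> tightened_interval L U l u \<subseteq> {0..n}"
  unfolding tightened_interval_def by auto

lemma llcc_tighten:
  assumes "llcc V \<alpha>" and "T \<subseteq> V" and "finite T" and nonempty: "\<forall>v\<in>T. \<alpha> v \<noteq> {}"
  shows "llcc V (tighten T \<alpha>)"
  unfolding llcc_def
proof
  fix v assume "v \<in> V"
  show "(\<exists>l u. tighten T \<alpha> v = {l..u}) \<and> tighten T \<alpha> v \<subseteq> {0..card V}"
  proof (cases "v \<in> T")
    case True
    define L where "L = Max ((Min \<circ> \<alpha>) ` T)"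
    define U where "U = Min ((Max \<circ> \<alpha>) ` T)"
    have eq: "tighten T \<alpha> v = tightened_interval L U (Min (\<alpha> v)) (Max (\<alpha> v))"
      by (simp add: tighten_def True L_def U_def)
    have "U \<le> Max (\<alpha> v)" using True assms(3) by (simp add: U_def)
    moreover have "Max (\<alpha> v) \<le> card V"
      using interval_eq_Min_Max(2)[OF assms(1)] True assms(2) nonempty by auto
    ultimately show ?thesis
      unfolding eq using tightened_interval_subset_atLeastAtMost
      by (auto simp only: tightened_interval_def)
  next
    case False
    then show ?thesis using assms(1) \<open>v \<in> V\<close> unfolding llcc_def tighten_def by auto
  qed
qed

text \<open>The classes of the refinement: the tightened interval of v depends only on this pair.\<close>
definition binding_bounds :: "'a set \<Rightarrow> ('a \<Rightarrow> nat set) \<Rightarrow> 'a \<Rightarrow> bool \<times> bool" where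
  "binding_bounds T \<alpha> v = (Min (\<alpha> v) = Max ((Min \<circ> \<alpha>) ` T), Max (\<alpha> v) = Min ((Max \<circ> \<alpha>) ` T))"

lemma tightened_interval_cong:
  "(l = L \<longleftrightarrow> l' = L) \<Longrightarrow> (u = U \<longleftrightarrow> u' = U) \<Longrightarrow> tightened_interval L U l u = tightened_interval L U l' u'"
  unfolding tightened_interval_def by simp

lemma uniform_tighten_on_fibre:
  assumes "B \<subseteq> T" and "\<forall>v\<in>B. binding_bounds T \<alpha> v = p"
  shows "uniform (tighten T \<alpha>) B"
  unfolding uniform_def
proof (intro ballI)
  fix u v assume "u \<in> B" "v \<in> B"
  then have same: "binding_bounds T \<alpha> u = binding_bounds T \<alpha> v" and "u \<in> T" "v \<in> T"
    using assms by auto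
  show "tighten T \<alpha> u = tighten T \<alpha> v"
    unfolding tighten_def using same
    by (simp only: \<open>u \<in> T\<close> \<open>v \<in> T\<close> if_True)
      (rule tightened_interval_cong; simp add: binding_bounds_def)
qed

lemma satisfies_tighten_iff:
  assumes "finite V" and "llcc V \<alpha>" and "T \<subseteq> V"
    and same: "\<forall>u\<in>T. \<forall>v\<in>T. same_type V E u v" and nonempty: "\<forall>v\<in>T. \<alpha> v \<noteq> {}"
  shows "satisfies V E X (tighten T \<alpha>) \<longleftrightarrow> satisfies V E X \<alpha>"
proof -
  define c where "c v = card (X \<inter> nbhd V E v)" for v
  have "finite T" using assms(1,3) finite_subset by blast
  have close: "\<forall>v\<in>T. \<forall>w\<in>T. c v \<le> c w + 1"
    unfolding c_def using same card_inter_nbhd_le_Suc_if_same_type[OF assms(1)] by blast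
  have "(\<forall>v\<in>T. c v \<in> \<alpha> v) \<longleftrightarrow> (\<forall>v\<in>T. c v \<in> {Min (\<alpha> v)..Max (\<alpha> v)})"
    using interval_eq_Min_Max(1)[OF assms(2)] assms(3) nonempty by blast
  also have "\<dots> \<longleftrightarrow> (\<forall>v\<in>T. c v \<in> tighten T \<alpha> v)"
    using in_intervals_iff_in_tightened_intervals[OF \<open>finite T\<close> close,
        of "Min \<circ> \<alpha>" "Max \<circ> \<alpha>"]
    by (simp add: tighten_def image_comp)
  moreover have "\<forall>v. v \<notin> T \<longrightarrow> tighten T \<alpha> v = \<alpha> v" by (simp add: tighten_def)
  ultimately show ?thesis
    unfolding satisfies_def c_def[symmetric] using assms(3) by blast
qed

lemma exists_uniform_refinement:
  assumes "graph V E" and "nbhd_decomp V E \<T>" and "llcc V \<alpha>" and "T \<in> \<T>"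
  shows "\<exists>\<T>' \<alpha>'. is_partition \<T>' T \<and> llcc V \<alpha>' \<and> card \<T>' \<le> 4
    \<and> (\<forall>v. v \<notin> T \<longrightarrow> \<alpha>' v = \<alpha> v) \<and> (\<forall>B\<in>\<T>'. uniform \<alpha>' B)
    \<and> (\<forall>X\<subseteq>V. satisfies V E X \<alpha> \<longleftrightarrow> satisfies V E X \<alpha>')"
proof -
  have "finite V" using assms(1) unfolding graph_def by auto
  have TV: "T \<subseteq> V" and "T \<noteq> {}" and same: "\<forall>u\<in>T. \<forall>v\<in>T. same_type V E u v"
    using assms(2,4) unfolding nbhd_decomp_def is_partition_def by auto
  have "finite T" using \<open>finite V\<close> TV finite_subset by blast
  show ?thesis
  proof (cases "\<exists>w\<in>T. \<alpha> w = {}")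
    case True
    then obtain w where w: "w \<in> T" "\<alpha> w = {}" by auto
    define \<alpha>' where "\<alpha>' v = (if v \<in> T then {} else \<alpha> v)" for v
    have "llcc V \<alpha>'"
      using assms(3) unfolding llcc_def \<alpha>'_def by (auto intro: exI[of _ 1] exI[of _ 0])
    moreover have "\<not> satisfies V E X \<alpha>" "\<not> satisfies V E X \<alpha>'" for X
      using w TV not_satisfies_if_empty_constraint[of w V] by (auto simp: \<alpha>'_def)
    moreover have "is_partition {T} T"
      using \<open>T \<noteq> {}\<close> unfolding is_partition_def by auto
    ultimately show ?thesis
      by (intro exI[of _ "{T}"] exI[of _ \<alpha>']) (auto simp: \<alpha>'_def uniform_def)
  next
    case False
    define \<T>' where "\<T>' = (\<lambda>p. {v \<in> T. binding_bounds T \<alpha> v = p}) ` binding_bounds T \<alpha> ` T"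
    show ?thesis
    proof (intro exI[of _ \<T>'] exI[of _ "tighten T \<alpha>"] conjI)
      show "is_partition \<T>' T" unfolding \<T>'_def by (rule is_partition_fibres)
      show "llcc V (tighten T \<alpha>)" using llcc_tighten[OF assms(3) TV \<open>finite T\<close>] False by blast
      have "card \<T>' \<le> card (binding_bounds T \<alpha> ` T)"
        unfolding \<T>'_def using \<open>finite T\<close> by (rule card_fibres_le)
      also have "\<dots> \<le> card (UNIV :: (bool \<times> bool) set)" by (intro card_mono) auto
      also have "\<dots> = 4"
        by (simp add: UNIV_Times_UNIV[symmetric] card_cartesian_product del: UNIV_Times_UNIV)
      finally show "card \<T>' \<le> 4" .
      show "\<forall>v. v \<notin> T \<longrightarrow> tighten T \<alpha> v = \<alpha> v" by (simp add: tighten_def)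
      show "\<forall>B\<in>\<T>'. uniform (tighten T \<alpha>) B"
        unfolding \<T>'_def by (auto intro: uniform_tighten_on_fibre)
      show "\<forall>X\<subseteq>V. satisfies V E X \<alpha> \<longleftrightarrow> satisfies V E X (tighten T \<alpha>)"
        using satisfies_tighten_iff[OF \<open>finite V\<close> assms(3) TV same] False by blast
    qed
  qed
qed

theorem mainTheorem10:
  fixes V :: "'a set" and E :: "'a \<Rightarrow> 'a \<Rightarrow> bool"
    and \<T> :: "'a set set" and \<alpha> :: "'a \<Rightarrow> nat set" and T :: "'a set"
  assumes "graph V E"
    and "nbhd_decomp V E \<T>"
    and "llcc V \<alpha>"
    and "T \<in> \<T>"
    and "\<not> uniform \<alpha> T"
  shows "\<exists>\<T>' \<alpha>'. is_partition \<T>' T \<and> llcc V \<alpha>'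
     \<and> card \<T>' \<le> 4
     \<and> nu \<alpha>' ((\<T> - {T}) \<union> \<T>') < nu \<alpha> \<T>
     \<and> (\<forall>X\<subseteq>V. satisfies V E X \<alpha> \<longleftrightarrow> satisfies V E X \<alpha>')"
proof -
  obtain \<T>' \<alpha>' where "is_partition \<T>' T" "llcc V \<alpha>'" "card \<T>' \<le> 4"
    and agree: "\<forall>v. v \<notin> T \<longrightarrow> \<alpha>' v = \<alpha> v" and unif: "\<forall>B\<in>\<T>'. uniform \<alpha>' B"
    and "\<forall>X\<subseteq>V. satisfies V E X \<alpha> \<longleftrightarrow> satisfies V E X \<alpha>'"
    using exists_uniform_refinement[OF assms(1-4)] by blast
  moreover have "is_partition \<T> V" and "finite V"
    using assms(1,2) unfolding nbhd_decomp_def graph_def by auto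
  ultimately show ?thesis
    using nu_less_if_refined_uniformly[OF _ _ assms(4,5) agree unif] by blast
qed

end
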